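(* Let $S$ be a pair of pants with boundary components $A_1,A_2,A_3$, let $\pi$ be a convex projective structure on $S$ with monodromy $\rho_\pi\colon \pi_1(S)\to\mathrm{SL}_3(\mathbb{R})$, and let $\lambda_i,\tau_i$ ($i=1,2,3$) be its Goldman boundary parameters and $\tau_{111}(T_\pm)$, $\sigma_1(B_j)$, $\sigma_2(B_j)$ its Fock–Goncharov coordinates (as defined in the context). Then, for $i=1,2,3$ (indices modulo 3), $$\lambda_i=\exp\Big(\tfrac13\sigma_1(B_{i+1})+\tfrac23\sigma_2(B_{i+1})+\tfrac23\sigma_1(B_{i-1})+\tfrac13\sigma_2(B_{i-1})+\tfrac23\tau_{111}(T_+)+\tfrac23\tau_{111}(T_-)\Big)$$ and $$\tau_i=\big(e^{-\sigma_1(B_{i+1})-\sigma_2(B_{i-1})}+1\big)\exp\Big(\tfrac13\sigma_1(B_{i+1})-\tfrac13\sigma_2(B_{i+1})-\tfrac13\sigma_1(B_{i-1})+\tfrac13\sigma_2(B_{i-1})-\tfrac13\tau_{111}(T_+)-\tfrac13\tau_{111}(T_-)\Big).$$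
   Context: $S$ is a compact oriented pair of pants with boundary components $A_1,A_2,A_3$, each oriented opposite to the boundary orientation induced by $S$ (and also regarded as conjugacy classes in $\pi_1(S)$). A convex projective structure $\pi$ on $S$ has a developing map $\widetilde S\to\mathbb{RP}^2$ (a homeomorphism onto a convex domain) equivariant under a monodromy $\rho_\pi\colon\pi_1(S)\to\mathrm{SL}_3(\mathbb{R})$, well defined up to conjugation. For such $\pi$, $\rho_\pi(A_i)$ has distinct positive real eigenvalues $0<\lambda_i<\mu_i<\nu_i$; Goldman's boundary parameters are $\lambda_i$ and $\tau_i=\mu_i+\nu_i$. The unstable flag of $\rho_\pi(A_i)$ is the flag $F^{(1)}\subset F^{(2)}$ where $F^{(1)}$ is the $\lambda_i$-eigenline and $F^{(2)}$ is spanned by the $\lambda_i$- and $\mu_i$-eigenlines. Identify the interior of $S$ with $S^2-\{p_1,p_2,p_3\}$, $p_i$ corresponding to $A_i$, and decompose it into two ideal triangles $T_+,T_-$ glued along three disjoint lines $B_1,B_2,B_3$, where $B_i$ goes (and is oriented) from $p_{i-1}$ to $p_{i+1}$ (indices mod 3), and $p_1,p_2,p_3$ occur in this order clockwise around $T_+$ (counterclockwise around $T_-$). Each vertex of a lift of $T_\pm$ to $\widetilde S$ is fixed by a conjugate $g A_j g^{-1}$ of some $A_j$; assign to it the unstable flag of $\rho_\pi(gA_jg^{-1})$ (equivariantly). For a flag $F$, $f^{(a)}$ denotes any nonzero element of $\Lambda^a F^{(a)}$, and wedges of total degree 3 are identified with real numbers via a fixed volume form. Triangle invariants: if a lift $\widetilde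 T_+$ has vertices with flags $F_1,F_2,F_3$ (vertices fixed by conjugates of $A_1,A_2,A_3$, occurring clockwise in this order), then $\tau_{111}(T_+)=\log\Big(\frac{f_1^{(2)}\wedge f_2^{(1)}}{f_2^{(1)}\wedge f_3^{(2)}}\frac{f_1^{(1)}\wedge f_3^{(2)}}{f_1^{(1)}\wedge f_2^{(2)}}\frac{f_2^{(2)}\wedge f_3^{(1)}}{f_1^{(2)}\wedge f_3^{(1)}}\Big)$; if a lift $\widetilde T_-$ has vertex flags $F'_1,F'_2,F'_3$ (counterclockwise in this order), then $\tau_{111}(T_-)=\log\Big(\frac{f_1'^{(2)}\wedge f_3'^{(1)}}{f_2'^{(2)}\wedge f_3'^{(1)}}\frac{f_1'^{(1)}\wedge f_2'^{(2)}}{f_1'^{(1)}\wedge f_3'^{(2)}}\frac{f_2'^{(1)}\wedge f_3'^{(2)}}{f_1'^{(2)}\wedge f_2'^{(1)}}\Big)$. Shear invariants: lift $B_i$ to $\widetilde B_i$ with adjacent lifts $\widetilde T_+,\widetilde T_-$; let $F_{i+1},F_{i-1}$ be the flags at the positive and negative endpoints of $\widetilde B_i$, $F_i$ the flag at the third vertex of $\widetilde T_+$, and $F_i'$ the flag at the third vertex of $\widetilde T_-$. Then $\sigma_1(B_i)=\log\Big(-\frac{f_{i+1}^{(1)}\wedge f_{i-1}^{(1)}\wedge f_i^{(1)}}{f_{i+1}^{(1)}\wedge f_{i-1}^{(1)}\wedge f_i'^{(1)}}\frac{f_{i-1}^{(2)}\wedge f_i'^{(1)}}{f_{i-1}^{(2)}\wedge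 f_i^{(1)}}\Big)$ and $\sigma_2(B_i)=\log\Big(-\frac{f_{i+1}^{(1)}\wedge f_{i-1}^{(1)}\wedge f_i'^{(1)}}{f_{i+1}^{(1)}\wedge f_{i-1}^{(1)}\wedge f_i^{(1)}}\frac{f_{i+1}^{(2)}\wedge f_i^{(1)}}{f_{i+1}^{(2)}\wedge f_i'^{(1)}}\Big)$. (All quantities inside the logarithms are positive.) *)

theory Defs
  imports "HOL-Analysis.Analysis"
begin

text \<open>Boundary components A_1, A_2, A_3 are indexed by 1, 2, 3; indices are taken modulo 3.\<close>

definition nxt3 :: "nat \<Rightarrow> nat" where
  "nxt3 i = (if i = 3 then 1 else i + 1)"

definition prv3 :: "nat \<Rightarrow> nat" where
  "prv3 i = (if i = 1 then 3 else i - 1)"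

text \<open>Fixed volume form on R^3: the determinant of the matrix with rows a, b, c.
  Wedges of total degree 3 are identified with real numbers through it.\<close>

definition vol3 :: "real^3 \<Rightarrow> real^3 \<Rightarrow> real^3 \<Rightarrow> real" where
  "vol3 a b c = det (vector [a, b, c] :: real^3^3)"

text \<open>A flag F^(1) in F^(2) in R^3 is represented by a pair (u, w) of vectors:
  f^(1) = u spans F^(1), f^(2) = u wedge w spans Lambda^2 F^(2).\<close>

type_synonym flagrep = "(real^3) \<times> (real^3)"

definition w11_1 :: "flagrep \<Rightarrow> flagrep \<Rightarrow> flagrep \<Rightarrow> real" where
  "w11_1 F G H = vol3 (fst F) (fst G) (fst H)"

definition w2_1 :: "flagrep \<Rightarrow> flagrep \<Rightarrow> real" where
  "w2_1 F G = vol3 (fst F) (snd F) (fst G)"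

definition w1_2 :: "flagrep \<Rightarrow> flagrep \<Rightarrow> real" where
  "w1_2 F G = vol3 (fst F) (fst G) (snd G)"

definition unstable_flag_rep :: "real^3^3 \<Rightarrow> real \<Rightarrow> real \<Rightarrow> real \<Rightarrow> flagrep \<Rightarrow> bool" where
  "unstable_flag_rep M lam mu nu F \<longleftrightarrow>
     0 < lam \<and> lam < mu \<and> mu < nu \<and>
     fst F \<noteq> 0 \<and> M *v fst F = lam *\<^sub>R fst F \<and>
     snd F \<noteq> 0 \<and> M *v snd F = mu *\<^sub>R snd F \<and>
     (\<exists>v. v \<noteq> 0 \<and> M *v v = nu *\<^sub>R v)"

definition flag_act :: "real^3^3 \<Rightarrow> flagrep \<Rightarrow> flagrep" where
  "flag_act g F = (g *v fst F, g *v snd F)"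

definition tau111_plus_arg :: "flagrep \<Rightarrow> flagrep \<Rightarrow> flagrep \<Rightarrow> real" where
  "tau111_plus_arg F1 F2 F3 =
     (w2_1 F1 F2 / w1_2 F2 F3) * (w1_2 F1 F3 / w1_2 F1 F2) * (w2_1 F2 F3 / w2_1 F1 F3)"

definition tau111_minus_arg :: "flagrep \<Rightarrow> flagrep \<Rightarrow> flagrep \<Rightarrow> real" where
  "tau111_minus_arg F1 F2 F3 =
     (w2_1 F1 F3 / w2_1 F2 F3) * (w1_2 F1 F2 / w1_2 F1 F3) * (w1_2 F2 F3 / w2_1 F1 F2)"

text \<open>Shear arguments: Fp, Fn flags at the positive/negative endpoints of the edge,
  F at the third vertex of the T_+ lift, F' at the third vertex of the T_- lift.\<close>

definition sigma1_arg :: "flagrep \<Rightarrow> flagrep \<Rightarrow> flagrep \<Rightarrow> flagrep \<Rightarrow> real" where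
  "sigma1_arg Fp Fn F F' =
     - (w11_1 Fp Fn F / w11_1 Fp Fn F') * (w2_1 Fn F' / w2_1 Fn F)"

definition sigma2_arg :: "flagrep \<Rightarrow> flagrep \<Rightarrow> flagrep \<Rightarrow> flagrep \<Rightarrow> real" where
  "sigma2_arg Fp Fn F F' =
     - (w11_1 Fp Fn F' / w11_1 Fp Fn F) * (w2_1 Fp F / w2_1 Fp F')"

text \<open>M i = rho(A_i); the lift of T_+ has vertices fixed
  by A_1, A_2, A_3 with flags F i; the lift of T_- adjacent to it along the lift of B_i
  has third vertex M (nxt3 i) applied to the vertex of F i, with flag F' i.\<close>

definition Fp_flag :: "(nat \<Rightarrow> real^3^3) \<Rightarrow> (nat \<Rightarrow> flagrep) \<Rightarrow> nat \<Rightarrow> flagrep" where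
  "Fp_flag M F i = flag_act (M (nxt3 i)) (F i)"

definition tau111_Tplus :: "(nat \<Rightarrow> real^3^3) \<Rightarrow> (nat \<Rightarrow> flagrep) \<Rightarrow> real" where
  "tau111_Tplus M F = ln (tau111_plus_arg (F 1) (F 2) (F 3))"

definition tau111_Tminus :: "(nat \<Rightarrow> real^3^3) \<Rightarrow> (nat \<Rightarrow> flagrep) \<Rightarrow> real" where
  "tau111_Tminus M F = ln (tau111_minus_arg (Fp_flag M F 1) (F 2) (F 3))"

definition sigma1_B :: "(nat \<Rightarrow> real^3^3) \<Rightarrow> (nat \<Rightarrow> flagrep) \<Rightarrow> nat \<Rightarrow> real" where
  "sigma1_B M F i = ln (sigma1_arg (F (nxt3 i)) (F (prv3 i)) (F i) (Fp_flag M F i))"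

definition sigma2_B :: "(nat \<Rightarrow> real^3^3) \<Rightarrow> (nat \<Rightarrow> flagrep) \<Rightarrow> nat \<Rightarrow> real" where
  "sigma2_B M F i = ln (sigma2_arg (F (nxt3 i)) (F (prv3 i)) (F i) (Fp_flag M F i))"

text \<open>The arguments of all logarithms are positive (as holds for monodromies of convex
  projective structures).\<close>

definition FG_positive :: "(nat \<Rightarrow> real^3^3) \<Rightarrow> (nat \<Rightarrow> flagrep) \<Rightarrow> bool" where
  "FG_positive M F \<longleftrightarrow>
     0 < tau111_plus_arg (F 1) (F 2) (F 3) \<and>
     0 < tau111_minus_arg (Fp_flag M F 1) (F 2) (F 3) \<and>
     (\<forall>i\<in>{1,2,3}. 0 < sigma1_arg (F (nxt3 i)) (F (prv3 i)) (F i) (Fp_flag M F i) \<and>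
                   0 < sigma2_arg (F (nxt3 i)) (F (prv3 i)) (F i) (Fp_flag M F i))"

end

theory Submission
  imports Defs
begin

(* Fix a vertex of the lift of T_+, with A = rho(A_i), its unstable flag X, and the flags Y, Z
   at the two other vertices. The exponential of every coordinate is a ratio of volumes, and
   pushing A through a volume only produces eigenvalues of A and det A = 1. In this way the
   product sigma1(B_(i+1)) sigma2(B_(i-1)) collapses to lambda mu^2 = mu / nu, and the product of
   sigma2(B_(i+1)), sigma1(B_(i-1)) and the two triple ratios to lambda / mu. Together with
   lambda mu nu = 1 these two ratios determine the eigenvalues, and taking logarithms gives the
   formulas. The lift of T_- on which tau111(T_-) is evaluated is moved to the one adjacent at
   the chosen vertex by a monodromy element, which does not change the triple ratio. *)

lemma vol3_expand:
  "vol3 a b c = a$1*b$2*c$3 - a$1*b$3*c$2 - a$2*b$1*c$3 + a$2*b$3*c$1 + a$3*b$1*c$2 - a$3*b$2*c$1"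
  unfolding vol3_def det_3 by (simp add: algebra_simps)

lemma vol3_cycle: "vol3 a b c = vol3 b c a"
  unfolding vol3_expand by (simp add: algebra_simps)

lemma vol3_scaleR:
  "vol3 (r *\<^sub>R a) b c = r * vol3 a b c"
  "vol3 a (r *\<^sub>R b) c = r * vol3 a b c"
  "vol3 a b (r *\<^sub>R c) = r * vol3 a b c"
  unfolding vol3_expand by (simp_all add: algebra_simps)

lemma vol3_add:
  "vol3 (x + y) b c = vol3 x b c + vol3 y b c"
  "vol3 a (x + y) c = vol3 a x c + vol3 a y c"
  unfolding vol3_expand by (simp_all add: algebra_simps)

lemma vol3_repeat:
  "vol3 a a c = 0"
  unfolding vol3_expand by (simp add: algebra_simps)

lemma vol3_cramer:
  "vol3 a b c *\<^sub>R v = vol3 v b c *\<^sub>R a + vol3 a v c *\<^sub>R b + vol3 a b v *\<^sub>R c"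
  unfolding vec_eq_iff forall_3 vol3_expand by (simp add: algebra_simps)

lemma vol3_matrix_vector_mult:
  "vol3 (g *v a) (g *v b) (g *v c) = det g * vol3 a b c"
proof -
  have "(vector [g *v a, g *v b, g *v c] :: real^3^3) = vector [a, b, c] ** transpose g"
    unfolding vec_eq_iff forall_3 matrix_matrix_mult_def matrix_vector_mult_def transpose_def
    by (simp add: sum_3 mult.commute)
  then show ?thesis
    unfolding vol3_def by (simp add: det_mul det_transpose)
qed

lemma eigenvectors_vol3_nonzero:
  assumes eu: "A *v u = l *\<^sub>R u" and ew: "A *v w = m *\<^sub>R w" and ev: "A *v v = n *\<^sub>R v"
    and "v \<noteq> 0" and "l \<noteq> n" and "m \<noteq> n" and uwz: "vol3 u w z \<noteq> 0"
  shows "vol3 u w v \<noteq> 0"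
proof
  assume "vol3 u w v = 0"
  define \<alpha> \<beta> \<gamma> where "\<alpha> = vol3 v w z" and "\<beta> = vol3 u v z" and "\<gamma> = vol3 u w z"
  have span: "\<gamma> *\<^sub>R v = \<alpha> *\<^sub>R u + \<beta> *\<^sub>R w"
    using vol3_cramer[of u w z v] \<open>vol3 u w v = 0\<close> unfolding \<alpha>_def \<beta>_def \<gamma>_def by simp
  have "A *v (\<gamma> *\<^sub>R v) - n *\<^sub>R (\<gamma> *\<^sub>R v) = 0"
    by (simp add: matrix_vector_mult_scaleR ev)
  then have "(\<alpha> * (l - n)) *\<^sub>R u + (\<beta> * (m - n)) *\<^sub>R w = 0"
    unfolding span
    by (simp add: matrix_vector_right_distrib matrix_vector_mult_scaleR eu ew algebra_simps)
  then have "vol3 ((\<alpha> * (l - n)) *\<^sub>R u + (\<beta> * (m - n)) *\<^sub>R w) w z = 0"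
    and "vol3 u ((\<alpha> * (l - n)) *\<^sub>R u + (\<beta> * (m - n)) *\<^sub>R w) z = 0"
    by (simp_all add: vol3_expand)
  then have "\<alpha> = 0" and "\<beta> = 0"
    using \<open>l \<noteq> n\<close> \<open>m \<noteq> n\<close> uwz
    by (simp_all add: vol3_add vol3_scaleR vol3_repeat \<gamma>_def[symmetric])
  then show False
    using span \<open>v \<noteq> 0\<close> uwz \<gamma>_def by simp
qed

lemma det_eq_eigenvalue_prod:
  assumes "A *v u = l *\<^sub>R u" and "A *v w = m *\<^sub>R w" and "A *v v = n *\<^sub>R v"
    and "vol3 u w v \<noteq> 0"
  shows "det A = l * m * n"
  using vol3_matrix_vector_mult[of A u w v] assms by (simp add: vol3_scaleR ac_simps)

lemma mat_one_mult_rotate: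
  fixes P Q R :: "'a::field^'n^'n"
  assumes "P ** Q ** R = mat 1"
  shows "Q ** R ** P = mat 1"
proof -
  have "P ** (Q ** R) = mat 1"
    using assms by (simp add: matrix_mul_assoc)
  then show ?thesis
    using matrix_left_right_inverse by blast
qed

lemma inverse_eigenvector:
  fixes P Q :: "real^'n^'n"
  assumes "P ** Q = mat 1" and "Q *v x = c *\<^sub>R x" and "c \<noteq> 0"
  shows "P *v x = inverse c *\<^sub>R x"
proof -
  have "P *v x = inverse c *\<^sub>R (c *\<^sub>R (P *v x))"
    using assms(3) by simp
  also have "c *\<^sub>R (P *v x) = (P ** Q) *v x"
    using assms(2) by (simp add: matrix_vector_mul_assoc[symmetric] matrix_vector_mult_scaleR)
  finally show ?thesis
    using assms(1) by simp
qed

(* For a b \<noteq> 0, flag_rescale a b F represents the same flag as F. *)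
definition flag_rescale :: "real \<Rightarrow> real \<Rightarrow> flagrep \<Rightarrow> flagrep" where
  "flag_rescale a b F = (a *\<^sub>R fst F, b *\<^sub>R snd F)"

lemma flag_rescale_1 [simp]: "flag_rescale 1 1 F = F"
  by (simp add: flag_rescale_def)

lemma flag_act_eigenflag:
  "g *v fst F = a *\<^sub>R fst F \<Longrightarrow> g *v snd F = b *\<^sub>R snd F \<Longrightarrow>
    flag_act g F = flag_rescale a b F"
  by (simp add: flag_act_def flag_rescale_def)

lemma flag_act_mult: "flag_act g (flag_act h F) = flag_act (g ** h) F"
  by (simp add: flag_act_def matrix_vector_mul_assoc)

lemma tau111_plus_arg_cycle: "tau111_plus_arg F G H = tau111_plus_arg G H F"
  unfolding tau111_plus_arg_def w2_1_def w1_2_def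
  by (metis (no_types, lifting) vol3_cycle mult.commute mult.left_commute times_divide_times_eq)

lemma tau111_minus_arg_cycle: "tau111_minus_arg F G H = tau111_minus_arg G H F"
  unfolding tau111_minus_arg_def w2_1_def w1_2_def
  by (metis (no_types, lifting) vol3_cycle mult.commute mult.left_commute times_divide_times_eq)

lemma tau111_minus_arg_flag_act:
  "det g \<noteq> 0 \<Longrightarrow>
    tau111_minus_arg (flag_act g F) (flag_act g G) (flag_act g H) = tau111_minus_arg F G H"
  unfolding tau111_minus_arg_def w2_1_def w1_2_def flag_act_def
  by (simp add: vol3_matrix_vector_mult)

lemma tau111_minus_arg_flag_rescale:
  assumes "a1 \<noteq> 0" "b1 \<noteq> 0" "a2 \<noteq> 0" "b2 \<noteq> 0" "a3 \<noteq> 0" "b3 \<noteq> 0"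
  shows "tau111_minus_arg (flag_rescale a1 b1 F) (flag_rescale a2 b2 G) (flag_rescale a3 b3 H)
    = tau111_minus_arg F G H"
  unfolding tau111_minus_arg_def w2_1_def w1_2_def flag_rescale_def
  using assms by (simp add: vol3_scaleR field_simps)

(* (X, Y, A Z) and (Y, Z, B X) are two lifts of the same triangle: B maps the first onto
   (B X, Y, Z) up to rescaling, since B A = C^-1. *)
lemma tau111_minus_arg_rotate:
  assumes BAC: "B ** A ** C = mat 1"
    and eY: "B *v fst Y = a *\<^sub>R fst Y" "B *v snd Y = b *\<^sub>R snd Y" and "a \<noteq> 0" "b \<noteq> 0"
    and eZ: "C *v fst Z = c *\<^sub>R fst Z" "C *v snd Z = d *\<^sub>R snd Z" and "c \<noteq> 0" "d \<noteq> 0"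
  shows "tau111_minus_arg X Y (flag_act A Z) = tau111_minus_arg Y Z (flag_act B X)"
proof -
  have "det B * det A * det C = 1"
    using arg_cong[OF BAC, of det] by (simp add: det_mul)
  then have "det B \<noteq> 0" by auto
  have "flag_act (B ** A) Z = flag_rescale (inverse c) (inverse d) Z"
    using inverse_eigenvector[OF BAC] eZ \<open>c \<noteq> 0\<close> \<open>d \<noteq> 0\<close> by (simp add: flag_act_eigenflag)
  then have "tau111_minus_arg X Y (flag_act A Z)
      = tau111_minus_arg (flag_rescale 1 1 (flag_act B X)) (flag_rescale a b Y)
          (flag_rescale (inverse c) (inverse d) Z)"
    using tau111_minus_arg_flag_act[OF \<open>det B \<noteq> 0\<close>, of X Y "flag_act A Z"]
      flag_act_eigenflag[OF eY]
    by (simp add: flag_act_mult)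
  also have "\<dots> = tau111_minus_arg (flag_act B X) Y Z"
    using \<open>a \<noteq> 0\<close> \<open>b \<noteq> 0\<close> \<open>c \<noteq> 0\<close> \<open>d \<noteq> 0\<close>
    by (intro tau111_minus_arg_flag_rescale) auto
  also have "\<dots> = tau111_minus_arg Y Z (flag_act B X)"
    by (rule tau111_minus_arg_cycle)
  finally show ?thesis .
qed

(* Y' represents the flag A^-1 Y; only its first vector enters the shears. *)
lemma sigma1_arg_mult_sigma2_arg:
  fixes A :: "real^3^3"
  assumes "det A \<noteq> 0"
    and eu: "A *v fst X = l *\<^sub>R fst X" and ew: "A *v snd X = m *\<^sub>R snd X"
    and ey: "A *v fst Y' = c *\<^sub>R fst Y"
    and s1: "sigma1_arg Z X Y Y' \<noteq> 0" and s2: "sigma2_arg X Y Z (flag_act A Z) \<noteq> 0"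
  shows "sigma1_arg Z X Y Y' * sigma2_arg X Y Z (flag_act A Z) = l * m^2 / det A"
proof -
  obtain u w where X: "X = (u, w)" by fastforce
  obtain y y2 where Y: "Y = (y, y2)" by fastforce
  obtain z z2 where Z: "Z = (z, z2)" by fastforce
  define y' where "y' = fst Y'"
  have s1_eq: "sigma1_arg Z X Y Y' = - (vol3 u y z / vol3 z u y') * (vol3 u w y' / vol3 u w y)"
    by (simp add: sigma1_arg_def w11_1_def w2_1_def X Y Z y'_def vol3_cycle[of z])
  have s2_eq: "sigma2_arg X Y Z (flag_act A Z)
      = - (vol3 u y (A *v z) / vol3 u y z) * (vol3 u w z / vol3 u w (A *v z))"
    by (simp add: sigma2_arg_def w11_1_def w2_1_def flag_act_def X Y Z)
  have nz: "vol3 u y z \<noteq> 0" "vol3 z u y' \<noteq> 0" "vol3 u w y' \<noteq> 0" "vol3 u w y \<noteq> 0"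
    "vol3 u y (A *v z) \<noteq> 0" "vol3 u w z \<noteq> 0" "vol3 u w (A *v z) \<noteq> 0"
    using s1 s2 unfolding s1_eq s2_eq by auto
  have zuy': "l * c * vol3 u y (A *v z) = det A * vol3 z u y'"
    using vol3_matrix_vector_mult[of A z u y'] eu ey X Y
    by (simp add: y'_def vol3_scaleR vol3_cycle[of "A *v z"] ac_simps)
  have uwy': "l * m * c * vol3 u w y = det A * vol3 u w y'"
    using vol3_matrix_vector_mult[of A u w y'] eu ew ey X Y
    by (simp add: y'_def vol3_scaleR ac_simps)
  have uwz: "l * m * vol3 u w (A *v z) = det A * vol3 u w z"
    using vol3_matrix_vector_mult[of A u w z] eu ew X by (simp add: vol3_scaleR ac_simps)
  have "l \<noteq> 0" "m \<noteq> 0" "c \<noteq> 0"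
    using uwy' nz \<open>det A \<noteq> 0\<close> by auto
  then have solved: "vol3 z u y' = l * c * vol3 u y (A *v z) / det A"
    "vol3 u w y' = l * m * c * vol3 u w y / det A"
    "vol3 u w (A *v z) = det A * vol3 u w z / (l * m)"
    using zuy' uwy' uwz \<open>det A \<noteq> 0\<close> by (simp_all add: field_simps)
  show ?thesis
    unfolding s1_eq s2_eq solved
    using nz \<open>l \<noteq> 0\<close> \<open>m \<noteq> 0\<close> \<open>c \<noteq> 0\<close> \<open>det A \<noteq> 0\<close>
    by (simp add: field_simps power2_eq_square)
qed

lemma sigma2_arg_sigma1_arg_tau111_product:
  fixes A :: "real^3^3"
  assumes "det A \<noteq> 0"
    and eu: "A *v fst X = l *\<^sub>R fst X" and ew: "A *v snd X = m *\<^sub>R snd X"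
    and ey: "A *v fst Y' = c *\<^sub>R fst Y"
    and s2: "sigma2_arg Z X Y Y' \<noteq> 0" and s1: "sigma1_arg X Y Z (flag_act A Z) \<noteq> 0"
    and tp: "tau111_plus_arg X Y Z \<noteq> 0" and tm: "tau111_minus_arg X Y (flag_act A Z) \<noteq> 0"
  shows "sigma2_arg Z X Y Y' * sigma1_arg X Y Z (flag_act A Z)
    * tau111_plus_arg X Y Z * tau111_minus_arg X Y (flag_act A Z) = l / m"
proof -
  obtain u w where X: "X = (u, w)" by fastforce
  obtain y y2 where Y: "Y = (y, y2)" by fastforce
  obtain z z2 where Z: "Z = (z, z2)" by fastforce
  define y' where "y' = fst Y'"
  have cyc: "vol3 z u y = vol3 u y z" "vol3 y z z2 = vol3 z z2 y"
    "vol3 y (A *v z) (A *v z2) = vol3 (A *v z) (A *v z2) y"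
    by (simp_all add: vol3_cycle)
  have s2_eq: "sigma2_arg Z X Y Y'
      = - (vol3 z u y' / vol3 u y z) * (vol3 z z2 y / vol3 z z2 y')"
    by (simp add: sigma2_arg_def w11_1_def w2_1_def X Y Z y'_def cyc)
  have s1_eq: "sigma1_arg X Y Z (flag_act A Z)
      = - (vol3 u y z / vol3 u y (A *v z)) * (vol3 y y2 (A *v z) / vol3 y y2 z)"
    by (simp add: sigma1_arg_def w11_1_def w2_1_def flag_act_def X Y Z)
  have tp_eq: "tau111_plus_arg X Y Z = (vol3 u w y / vol3 z z2 y)
      * (vol3 u z z2 / vol3 u y y2) * (vol3 y y2 z / vol3 u w z)"
    by (simp add: tau111_plus_arg_def w1_2_def w2_1_def X Y Z cyc)
  have tm_eq: "tau111_minus_arg X Y (flag_act A Z) = (vol3 u w (A *v z) / vol3 y y2 (A *v z))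
      * (vol3 u y y2 / vol3 u (A *v z) (A *v z2)) * (vol3 (A *v z) (A *v z2) y / vol3 u w y)"
    by (simp add: tau111_minus_arg_def w1_2_def w2_1_def flag_act_def X Y Z cyc)
  have nz: "vol3 z u y' \<noteq> 0" "vol3 u y z \<noteq> 0" "vol3 z z2 y \<noteq> 0" "vol3 z z2 y' \<noteq> 0"
    "vol3 u y (A *v z) \<noteq> 0" "vol3 y y2 (A *v z) \<noteq> 0" "vol3 y y2 z \<noteq> 0"
    "vol3 u w y \<noteq> 0" "vol3 u z z2 \<noteq> 0" "vol3 u y y2 \<noteq> 0" "vol3 u w z \<noteq> 0"
    "vol3 u (A *v z) (A *v z2) \<noteq> 0" "vol3 (A *v z) (A *v z2) y \<noteq> 0"
    using s2 s1 tp tm unfolding s2_eq s1_eq tp_eq tm_eq by auto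
  have zuy': "l * c * vol3 u y (A *v z) = det A * vol3 z u y'"
    using vol3_matrix_vector_mult[of A z u y'] eu ey X Y
    by (simp add: y'_def vol3_scaleR vol3_cycle[of "A *v z"] ac_simps)
  have zz2y': "c * vol3 (A *v z) (A *v z2) y = det A * vol3 z z2 y'"
    using vol3_matrix_vector_mult[of A z z2 y'] ey Y by (simp add: y'_def vol3_scaleR)
  have uwz: "l * m * vol3 u w (A *v z) = det A * vol3 u w z"
    using vol3_matrix_vector_mult[of A u w z] eu ew X by (simp add: vol3_scaleR ac_simps)
  have uzz2: "l * vol3 u (A *v z) (A *v z2) = det A * vol3 u z z2"
    using vol3_matrix_vector_mult[of A u z z2] eu X by (simp add: vol3_scaleR)
  have "l \<noteq> 0" "m \<noteq> 0" "c \<noteq> 0"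
    using zuy' uwz nz \<open>det A \<noteq> 0\<close> by auto
  then have solved: "vol3 z u y' = l * c * vol3 u y (A *v z) / det A"
    "vol3 z z2 y' = c * vol3 (A *v z) (A *v z2) y / det A"
    "vol3 u w (A *v z) = det A * vol3 u w z / (l * m)"
    "vol3 u (A *v z) (A *v z2) = det A * vol3 u z z2 / l"
    using zuy' zz2y' uwz uzz2 \<open>det A \<noteq> 0\<close> by (simp_all add: field_simps)
  show ?thesis
    unfolding s2_eq s1_eq tp_eq tm_eq solved
    using nz \<open>l \<noteq> 0\<close> \<open>m \<noteq> 0\<close> \<open>c \<noteq> 0\<close> \<open>det A \<noteq> 0\<close>
    by (simp add: field_simps)
qed

lemma eigenvalues_from_vertex_coordinates:
  fixes A B C :: "real^3^3" and X Y Z :: flagrep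
  defines "s1 \<equiv> sigma1_arg Z X Y (flag_act C Y)" and "s2 \<equiv> sigma2_arg Z X Y (flag_act C Y)"
    and "s1' \<equiv> sigma1_arg X Y Z (flag_act A Z)" and "s2' \<equiv> sigma2_arg X Y Z (flag_act A Z)"
    and "t \<equiv> tau111_plus_arg X Y Z" and "t' \<equiv> tau111_minus_arg X Y (flag_act A Z)"
  assumes "det A = 1" and BAC: "B ** A ** C = mat 1"
    and flag: "unstable_flag_rep A l m n X"
    and eY: "B *v fst Y = l\<^sub>Y *\<^sub>R fst Y" and "l\<^sub>Y \<noteq> 0"
    and pos: "0 < s1" "0 < s2" "0 < s1'" "0 < s2'" "0 < t" "0 < t'"
  shows "l = exp (ln s1 / 3 + 2/3 * ln s2 + 2/3 * ln s1' + ln s2' / 3 + 2/3 * ln t + 2/3 * ln t')"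
    and "m + n = (exp (- ln s1 - ln s2') + 1)
      * exp (ln s1 / 3 - ln s2 / 3 - ln s1' / 3 + ln s2' / 3 - ln t / 3 - ln t' / 3)"
proof -
  obtain v where "v \<noteq> 0" "A *v v = n *\<^sub>R v" and lmn: "0 < l" "l < m" "m < n"
    and eu: "A *v fst X = l *\<^sub>R fst X" and ew: "A *v snd X = m *\<^sub>R snd X"
    using flag unfolding unstable_flag_rep_def by blast
  have "vol3 (fst X) (snd X) (fst Y) \<noteq> 0"
    using pos(5) by (auto simp: t_def tau111_plus_arg_def w2_1_def)
  then have "vol3 (fst X) (snd X) v \<noteq> 0"
    using eigenvectors_vol3_nonzero[OF eu ew \<open>A *v v = n *\<^sub>R v\<close> \<open>v \<noteq> 0\<close>] lmn by simp
  then have "l * m * n = 1"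
    using det_eq_eigenvalue_prod[OF eu ew \<open>A *v v = n *\<^sub>R v\<close>] \<open>det A = 1\<close> by simp
  have "A ** C ** B = mat 1"
    using BAC by (rule mat_one_mult_rotate)
  then have ey: "A *v fst (flag_act C Y) = inverse l\<^sub>Y *\<^sub>R fst Y"
    using inverse_eigenvector[of "A ** C" B, OF _ eY \<open>l\<^sub>Y \<noteq> 0\<close>]
    by (simp add: flag_act_def matrix_vector_mul_assoc)
  have "s1 * s2' = m / n"
    using sigma1_arg_mult_sigma2_arg[OF _ eu ew ey] pos \<open>det A = 1\<close> \<open>l * m * n = 1\<close> lmn
    by (simp add: s1_def s2'_def field_simps power2_eq_square)
  from arg_cong[OF this, of ln] have log1: "ln s1 + ln s2' = ln m - ln n"
    using pos lmn by (simp add: ln_mult ln_div)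
  have "s2 * s1' * t * t' = l / m"
    using sigma2_arg_sigma1_arg_tau111_product[OF _ eu ew ey] pos \<open>det A = 1\<close>
    by (simp add: s2_def s1'_def t_def t'_def)
  from arg_cong[OF this, of ln] have log2: "ln s2 + ln s1' + ln t + ln t' = ln l - ln m"
    using pos lmn by (simp add: ln_mult ln_div)
  from arg_cong[OF \<open>l * m * n = 1\<close>, of ln] have log3: "ln l + ln m + ln n = 0"
    using lmn by (simp add: ln_mult)
  have "ln s1 / 3 + 2/3 * ln s2 + 2/3 * ln s1' + ln s2' / 3 + 2/3 * ln t + 2/3 * ln t' = ln l"
    and "ln s1 / 3 - ln s2 / 3 - ln s1' / 3 + ln s2' / 3 - ln t / 3 - ln t' / 3 = ln m"
    and "- ln s1 - ln s2' = ln (n / m)"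
    using log1 log2 log3 lmn by (simp_all add: ln_div)
  then show "l = exp (ln s1 / 3 + 2/3 * ln s2 + 2/3 * ln s1' + ln s2' / 3 + 2/3 * ln t + 2/3 * ln t')"
    and "m + n = (exp (- ln s1 - ln s2') + 1)
      * exp (ln s1 / 3 - ln s2 / 3 - ln s1' / 3 + ln s2' / 3 - ln t / 3 - ln t' / 3)"
    using lmn by (simp_all add: distrib_right)
qed

lemma unstable_flag_repD:
  assumes "unstable_flag_rep M l m n F"
  shows "M *v fst F = l *\<^sub>R fst F" "M *v snd F = m *\<^sub>R snd F" "l \<noteq> 0" "m \<noteq> 0"
  using assms unfolding unstable_flag_rep_def by auto

lemma nxt3_prv3:
  assumes "i \<in> {1,2,3}"
  shows "nxt3 i \<in> {1,2,3}" "prv3 i \<in> {1,2,3}" "nxt3 (nxt3 i) = prv3 i" "prv3 (prv3 i) = nxt3 i"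
    "nxt3 (prv3 i) = i" "prv3 (nxt3 i) = i"
  using assms by (auto simp: nxt3_def prv3_def)

(* Wherever these rules are used, One_nat_def must be disabled: it rewrites 1 to Suc 0 first. *)
lemma nxt3_prv3_values:
  "nxt3 1 = 2" "nxt3 2 = 3" "nxt3 3 = 1" "prv3 1 = 3" "prv3 2 = 1" "prv3 3 = 2"
  by (simp_all add: nxt3_def prv3_def)

lemma monodromy_relation_at_vertex:
  fixes M :: "nat \<Rightarrow> real^3^3"
  assumes rel: "M 3 ** M 2 ** M 1 = mat 1" and "i \<in> {1,2,3}"
  shows "M (nxt3 i) ** M i ** M (prv3 i) = mat 1"
proof -
  have "M 2 ** M 1 ** M 3 = mat 1" "M 1 ** M 3 ** M 2 = mat 1"
    using mat_one_mult_rotate[OF rel] mat_one_mult_rotate by blast+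
  then show ?thesis
    using assms by (auto simp: nxt3_prv3_values simp del: One_nat_def)
qed

lemma tau111_plus_arg_at_vertex:
  assumes "i \<in> {1,2,3}"
  shows "tau111_plus_arg (F 1) (F 2) (F 3) = tau111_plus_arg (F i) (F (nxt3 i)) (F (prv3 i))"
  using assms tau111_plus_arg_cycle[of "F 1" "F 2" "F 3"] tau111_plus_arg_cycle[of "F 2" "F 3" "F 1"]
  by (auto simp: nxt3_prv3_values simp del: One_nat_def)

lemma tau111_minus_arg_at_vertex:
  fixes M :: "nat \<Rightarrow> real^3^3"
  assumes rel: "M 3 ** M 2 ** M 1 = mat 1"
    and flags: "\<And>j. j \<in> {1,2,3} \<Longrightarrow> unstable_flag_rep (M j) (lam j) (mu j) (nu j) (F j)"
    and "i \<in> {1,2,3}"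
  shows "tau111_minus_arg (Fp_flag M F 1) (F 2) (F 3)
    = tau111_minus_arg (F i) (F (nxt3 i)) (flag_act (M i) (F (prv3 i)))"
proof -
  have rotate: "tau111_minus_arg (F j) (F (nxt3 j)) (flag_act (M j) (F (prv3 j)))
      = tau111_minus_arg (F (nxt3 j)) (F (prv3 j)) (flag_act (M (nxt3 j)) (F j))"
    if "j \<in> {1,2,3}" for j
    using tau111_minus_arg_rotate[OF monodromy_relation_at_vertex[OF rel that]]
      unstable_flag_repD[OF flags] nxt3_prv3[OF that] by blast
  have "tau111_minus_arg (Fp_flag M F 1) (F 2) (F 3)
      = tau111_minus_arg (F 2) (F 3) (flag_act (M 2) (F 1))"
    by (simp add: Fp_flag_def nxt3_prv3_values tau111_minus_arg_cycle del: One_nat_def)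
  then show ?thesis
    using rotate[of 2] rotate[of 3] \<open>i \<in> {1,2,3}\<close>
    by (auto simp: nxt3_prv3_values simp del: One_nat_def)
qed

theorem proposition1:
  fixes M :: "nat \<Rightarrow> real^3^3"
    and F :: "nat \<Rightarrow> flagrep"
    and lam mu nu :: "nat \<Rightarrow> real"
  assumes SL3: "\<And>i. i \<in> {1,2,3} \<Longrightarrow> det (M i) = 1"
    and rel: "M 3 ** M 2 ** M 1 = mat 1"
    and flags: "\<And>i. i \<in> {1,2,3} \<Longrightarrow> unstable_flag_rep (M i) (lam i) (mu i) (nu i) (F i)"
    and pos: "FG_positive M F"
    and i: "i \<in> {1,2,3}"
  shows "(lam i = exp (sigma1_B M F (nxt3 i) / 3 + 2/3 * sigma2_B M F (nxt3 i)
                     + 2/3 * sigma1_B M F (prv3 i) + sigma2_B M F (prv3 i) / 3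
                     + 2/3 * tau111_Tplus M F + 2/3 * tau111_Tminus M F))
         \<and> (mu i + nu i = (exp (- sigma1_B M F (nxt3 i) - sigma2_B M F (prv3 i)) + 1)
                     * exp (sigma1_B M F (nxt3 i) / 3 - sigma2_B M F (nxt3 i) / 3
                            - sigma1_B M F (prv3 i) / 3 + sigma2_B M F (prv3 i) / 3
                            - tau111_Tplus M F / 3 - tau111_Tminus M F / 3))"
proof -
  note idx = nxt3_prv3[OF i]
  note tp = tau111_plus_arg_at_vertex[OF i, of F]
  have tm: "tau111_minus_arg (Fp_flag M F 1) (F 2) (F 3)
      = tau111_minus_arg (F i) (F (nxt3 i)) (flag_act (M i) (F (prv3 i)))"
    using rel flags i by (rule tau111_minus_arg_at_vertex)
  have shears: "0 < sigma1_arg (F (nxt3 j)) (F (prv3 j)) (F j) (Fp_flag M F j)"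
    "0 < sigma2_arg (F (nxt3 j)) (F (prv3 j)) (F j) (Fp_flag M F j)" if "j \<in> {1,2,3}" for j
    using pos that unfolding FG_positive_def by blast+
  have "0 < tau111_plus_arg (F 1) (F 2) (F 3)" "0 < tau111_minus_arg (Fp_flag M F 1) (F 2) (F 3)"
    using pos unfolding FG_positive_def by blast+
  with shears[OF idx(1)] shears[OF idx(2)] show ?thesis
    using eigenvalues_from_vertex_coordinates[OF SL3[OF i] monodromy_relation_at_vertex[OF rel i]
        flags[OF i] unstable_flag_repD(1,3)[OF flags[OF idx(1)]]]
    unfolding tau111_Tplus_def tau111_Tminus_def tp tm
    unfolding sigma1_B_def sigma2_B_def Fp_flag_def idx by simp
qed

end
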